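(* For $k\in\mathbb{N}$ let $C(k)=\dfrac{2\,(4^{k}-3k-1)}{(2k+1)!}$. (i) For every $x\in(0,\pi/2)$ and every $n\in\mathbb{N}$, $$3+\frac{1}{\cos x}\sum_{k=2}^{2n+1}(-1)^{k}C(k)\,x^{2k}<2\,\frac{\sin x}{x}+\frac{\tan x}{x}<3+\frac{1}{\cos x}\sum_{k=2}^{2n}(-1)^{k}C(k)\,x^{2k}.$$ (ii) For every $x\in(0,\pi/2)$ and every integer $m\ge 2$, $$\Big|\,2\,\frac{\sin x}{x}+\frac{\tan x}{x}-\Big(3+\frac{1}{\cos x}\sum_{k=2}^{m}(-1)^{k}C(k)\,x^{2k}\Big)\Big|<C(m+1)\,\frac{x^{2m+2}}{\cos x}.$$
   Context: $\mathbb{N}=\{1,2,3,\dots\}$. *)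

theory Defs
  imports Complex_Main
begin

definition C :: "nat \<Rightarrow> real" where
  "C k = 2 * (4 ^ k - 3 * real k - 1) / fact (2 * k + 1)"

end

theory Submission
  imports Defs
begin

text \<open>
  Since \<open>cos x * (2 * sin x + tan x) = sin (2 * x) + sin x\<close>, the claim is about the Taylor
  series of \<open>(sin (2 * x) + sin x) / x - 3 * cos x\<close>, which is \<open>\<Sum>k. (-1)^k * C k * x^(2*k)\<close>;
  its terms of index 0 and 1 vanish. From \<open>4 * C (k + 1) < C k\<close> for \<open>k \<ge> 2\<close> the terms
  \<open>C k * x^(2*k)\<close> decrease strictly as soon as \<open>x < 2\<close>, so the series is alternating, and
  Leibniz' estimate (the remainder after the term of index \<open>m\<close> has the sign of the next
  term and is strictly smaller in absolute value) yields both parts after division by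
  \<open>cos x > 0\<close>.
\<close>

lemma alternating_suminf_strict_bounds:
  fixes b :: "nat \<Rightarrow> real"
  assumes lim: "b \<longlonglongrightarrow> 0" and dec: "\<And>n. b (Suc n) < b n"
  shows "0 < (\<Sum>i. (-1) ^ i * b i)" and "(\<Sum>i. (-1) ^ i * b i) < b 0"
proof -
  have "decseq b" by (rule decseq_SucI) (simp add: dec less_imp_le)
  then have nonneg: "0 \<le> b n" for n using lim decseq_ge by blast
  note leibniz = summable_Leibniz'[of b, OF lim nonneg less_imp_le[OF dec]]
  have "b 0 - b 1 \<le> (\<Sum>i. (-1) ^ i * b i)"
    using leibniz(2)[of 1] by (simp add: numeral_2_eq_2)
  with dec[of 0] show "0 < (\<Sum>i. (-1) ^ i * b i)" by simp
  have "(\<Sum>i. (-1) ^ i * b i) \<le> b 0 - b 1 + b 2"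
    using leibniz(4)[of 1] by (simp add: numeral_2_eq_2 numeral_3_eq_3)
  with dec[of 1] show "(\<Sum>i. (-1) ^ i * b i) < b 0" by (simp add: numeral_2_eq_2)
qed

lemma alternating_remainder_strict_bounds:
  fixes a :: "nat \<Rightarrow> real"
  assumes sums: "(\<lambda>k. (-1) ^ k * a k) sums S" and dec: "\<And>k. M < k \<Longrightarrow> a (Suc k) < a k"
  shows "0 < (-1) ^ Suc M * (S - (\<Sum>k\<le>M. (-1) ^ k * a k))"
    and "(-1) ^ Suc M * (S - (\<Sum>k\<le>M. (-1) ^ k * a k)) < a (Suc M)"
proof -
  define b where "b i = a (i + Suc M)" for i
  have "(\<lambda>k. (-1) ^ k * a k) \<longlonglongrightarrow> 0"
    using sums summable_LIMSEQ_zero sums_summable by blast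
  then have "(\<lambda>k. \<bar>a k\<bar>) \<longlonglongrightarrow> 0"
    using tendsto_rabs_zero by (fastforce simp: abs_mult)
  then have "a \<longlonglongrightarrow> 0" by (rule tendsto_rabs_zero_cancel)
  then have lim: "b \<longlonglongrightarrow> 0"
    unfolding b_def by (rule LIMSEQ_ignore_initial_segment)
  have "(\<lambda>i. (-1) ^ Suc M * ((-1) ^ (i + Suc M) * a (i + Suc M)))
          sums ((-1) ^ Suc M * (S - (\<Sum>k\<le>M. (-1) ^ k * a k)))"
    unfolding lessThan_Suc_atMost[symmetric]
    by (intro sums_mult sums_split_initial_segment sums)
  moreover have "(-1) ^ Suc M * ((-1) ^ (i + Suc M) * a (i + Suc M)) = (-1) ^ i * b i" for i
    by (simp add: b_def power_add mult_ac)
  ultimately have "(-1) ^ Suc M * (S - (\<Sum>k\<le>M. (-1) ^ k * a k)) = (\<Sum>i. (-1) ^ i * b i)"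
    by (simp add: sums_iff)
  moreover have "b (Suc n) < b n" for n unfolding b_def using dec by simp
  ultimately show "0 < (-1) ^ Suc M * (S - (\<Sum>k\<le>M. (-1) ^ k * a k))"
    and "(-1) ^ Suc M * (S - (\<Sum>k\<le>M. (-1) ^ k * a k)) < a (Suc M)"
    using alternating_suminf_strict_bounds[OF lim] by (auto simp: b_def)
qed

lemma four_pow_ge: "2 \<le> k \<Longrightarrow> 15 * real k + 2 \<le> 2 * 4 ^ k"
  by (induction k rule: dec_induct) simp_all

lemma C_pos: "2 \<le> k \<Longrightarrow> 0 < C k"
  using four_pow_ge[of k] by (simp add: C_def)

lemma C_Suc_less:
  assumes k: "2 \<le> k"
  shows "4 * C (Suc k) < C k"
proof -
  define A where "A = (4::real) ^ k - 3 * real k - 1"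
  define B where "B = (4::real) ^ Suc k - 3 * real (Suc k) - 1"
  define D where "D = (2 * real k + 2) * (2 * real k + 3)"
  define F where "F = (fact (2 * k + 1) :: real)"
  have A_pos: "0 < A" and B_le: "B \<le> 6 * A"
    using four_pow_ge[OF k] k by (simp_all add: A_def B_def)
  have "30 \<le> D"
    using k mult_mono[of 6 "2 * real k + 2" 5 "2 * real k + 3"] by (simp add: D_def)
  then have "30 * A \<le> D * A" using A_pos by (intro mult_right_mono) simp_all
  with A_pos B_le have "4 * B < D * A" by linarith
  have "fact (2 * Suc k + 1) = D * F"
    by (simp add: D_def F_def algebra_simps)
  then have "4 * C (Suc k) = 2 * (4 * B) / (D * F)"
    by (simp add: C_def B_def)
  also have "\<dots> < 2 * (D * A) / (D * F)"
    using \<open>4 * B < D * A\<close> \<open>30 \<le> D\<close> by (intro divide_strict_right_mono) (simp_all add: F_def mult.commute)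
  also have "\<dots> = C k"
    using \<open>30 \<le> D\<close> by (simp add: C_def A_def F_def)
  finally show ?thesis .
qed

lemma C_pow_Suc_less:
  fixes x :: real
  assumes "0 < x" "x < 2" "2 \<le> k"
  shows "C (Suc k) * x ^ (2 * Suc k) < C k * x ^ (2 * k)"
proof -
  have "x\<^sup>2 < 4" using assms power_strict_mono[of x 2 2] by simp
  have "C (Suc k) * x ^ (2 * Suc k) = (C (Suc k) * x\<^sup>2) * x ^ (2 * k)"
    by (simp add: power_add[symmetric])
  also have "\<dots> < C k * x ^ (2 * k)"
  proof (intro mult_strict_right_mono)
    have "C (Suc k) * x\<^sup>2 < 4 * C (Suc k)"
      using \<open>x\<^sup>2 < 4\<close> C_pos[of "Suc k"] assms by simp
    then show "C (Suc k) * x\<^sup>2 < C k" using C_Suc_less[OF \<open>2 \<le> k\<close>] by linarith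
  qed (use assms in simp)
  finally show ?thesis .
qed

lemma sums_C_pow:
  fixes x :: real
  assumes "x \<noteq> 0"
  shows "(\<lambda>k. (-1) ^ k * C k * x ^ (2 * k)) sums ((sin (2 * x) + sin x) / x - 3 * cos x)"
proof -
  have "(\<lambda>k. ((-1) ^ k / fact (2 * k + 1) * (2 * x) ^ (2 * k + 1)
              + (-1) ^ k / fact (2 * k + 1) * x ^ (2 * k + 1)) / x
           - 3 * ((-1) ^ k / fact (2 * k) * x ^ (2 * k)))
        sums ((sin (2 * x) + sin x) / x - 3 * cos x)" (is "?f sums _")
    by (intro sums_diff sums_divide sums_add sums_mult sin_paired cos_paired)
  moreover have "?f k = (-1) ^ k * C k * x ^ (2 * k)" for k
  proof -
    define d where "d = 2 * real k + 1"
    define F where "F = (fact (2 * k) :: real)"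
    have "d \<noteq> 0" "F \<noteq> 0" by (simp_all add: d_def F_def)
    have fact_odd: "(fact (2 * k + 1) :: real) = d * F"
      by (simp add: d_def F_def algebra_simps)
    have pow_odd: "(2 * x) ^ (2 * k + 1) = 2 * 4 ^ k * x ^ (2 * k) * x"
      by (simp add: power_mult_distrib power_mult)
    have "?f k = (-1) ^ k * ((2 * 4 ^ k + 1 - 3 * d) / (d * F)) * x ^ (2 * k)"
      unfolding fact_odd pow_odd F_def[symmetric]
      using assms \<open>d \<noteq> 0\<close> \<open>F \<noteq> 0\<close> by (simp add: field_simps)
    also have "\<dots> = (-1) ^ k * C k * x ^ (2 * k)"
      by (simp add: C_def fact_odd d_def F_def algebra_simps)
    finally show ?thesis .
  qed
  ultimately show ?thesis by simp
qed

lemma two_sinc_plus_tanc_eq: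
  fixes x :: real
  assumes "cos x \<noteq> 0"
  shows "2 * (sin x / x) + tan x / x = 3 + (1 / cos x) * ((sin (2 * x) + sin x) / x - 3 * cos x)"
  using assms unfolding tan_def sin_double by (cases "x = 0") (simp_all add: field_simps)

lemma sum_C_pow_from_2:
  fixes x :: real
  shows "(\<Sum>k=2..M. (-1) ^ k * C k * x ^ (2 * k)) = (\<Sum>k\<le>M. (-1) ^ k * (C k * x ^ (2 * k)))"
proof (rule sum.mono_neutral_cong_left)
  show "\<forall>k\<in>{..M} - {2..M}. (-1) ^ k * (C k * x ^ (2 * k)) = 0"
    by (auto simp: not_le less_2_cases_iff C_def)
qed (auto simp: mult.assoc)

lemma two_sinc_plus_tanc_remainder_bounds:
  fixes x :: real
  assumes x: "0 < x" "x < pi / 2" and M: "1 \<le> M"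
  defines "R \<equiv> 2 * (sin x / x) + tan x / x - (3 + (1 / cos x) * (\<Sum>k=2..M. (-1) ^ k * C k * x ^ (2 * k)))"
  shows "0 < (-1) ^ Suc M * R" and "(-1) ^ Suc M * R < C (Suc M) * x ^ (2 * Suc M) / cos x"
proof -
  define S where "S = (sin (2 * x) + sin x) / x - 3 * cos x"
  have "0 < cos x" using x by (intro cos_gt_zero_pi) auto
  have "x < 2" using x pi_less_4 by linarith
  have sums: "(\<lambda>k. (-1) ^ k * (C k * x ^ (2 * k))) sums S"
    using sums_C_pow[of x] x by (simp add: S_def mult.assoc)
  have dec: "C (Suc k) * x ^ (2 * Suc k) < C k * x ^ (2 * k)" if "M < k" for k
    using C_pow_Suc_less[OF x(1) \<open>x < 2\<close>] M that by simp
  note bounds = alternating_remainder_strict_bounds[where M = M, OF sums dec]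
  define E where "E = (-1) ^ Suc M * (S - (\<Sum>k\<le>M. (-1) ^ k * (C k * x ^ (2 * k))))"
  have R_eq: "(-1) ^ Suc M * R = E / cos x"
    using \<open>0 < cos x\<close> two_sinc_plus_tanc_eq[of x]
    unfolding R_def E_def S_def[symmetric] sum_C_pow_from_2
    by (simp add: field_simps)
  show "0 < (-1) ^ Suc M * R"
    unfolding R_eq using bounds(1)[folded E_def] \<open>0 < cos x\<close> by simp
  show "(-1) ^ Suc M * R < C (Suc M) * x ^ (2 * Suc M) / cos x"
    unfolding R_eq using bounds(2)[folded E_def] \<open>0 < cos x\<close> by (rule divide_strict_right_mono)
qed

theorem theorem3:
  shows "(\<forall>x::real. \<forall>n::nat. 0 < x \<and> x < pi / 2 \<and> n \<ge> 1 \<longrightarrow>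
            3 + (1 / cos x) * (\<Sum>k=2..2*n+1. (-1) ^ k * C k * x ^ (2*k))
              < 2 * (sin x / x) + tan x / x
          \<and> 2 * (sin x / x) + tan x / x
              < 3 + (1 / cos x) * (\<Sum>k=2..2*n. (-1) ^ k * C k * x ^ (2*k)))
       \<and> (\<forall>x::real. \<forall>m::nat. 0 < x \<and> x < pi / 2 \<and> m \<ge> 2 \<longrightarrow>
            \<bar>2 * (sin x / x) + tan x / x
              - (3 + (1 / cos x) * (\<Sum>k=2..m. (-1) ^ k * C k * x ^ (2*k)))\<bar>
              < C (m + 1) * x ^ (2*m+2) / cos x)"
proof (intro conjI allI impI; elim conjE)
  fix x :: real and n :: nat
  assume x: "0 < x" "x < pi / 2" and "n \<ge> 1"
  show "3 + (1 / cos x) * (\<Sum>k=2..2*n+1. (-1) ^ k * C k * x ^ (2*k)) < 2 * (sin x / x) + tan x / x"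
    using two_sinc_plus_tanc_remainder_bounds(1)[OF x, of "2 * n + 1"] by simp
  show "2 * (sin x / x) + tan x / x < 3 + (1 / cos x) * (\<Sum>k=2..2*n. (-1) ^ k * C k * x ^ (2*k))"
    using two_sinc_plus_tanc_remainder_bounds(1)[OF x, of "2 * n"] \<open>n \<ge> 1\<close> by simp
next
  fix x :: real and m :: nat
  assume x: "0 < x" "x < pi / 2" and "m \<ge> 2"
  let ?R = "2 * (sin x / x) + tan x / x - (3 + (1 / cos x) * (\<Sum>k=2..m. (-1) ^ k * C k * x ^ (2*k)))"
  have "m \<ge> 1" using \<open>m \<ge> 2\<close> by simp
  note bounds = two_sinc_plus_tanc_remainder_bounds[OF x \<open>m \<ge> 1\<close>]
  have "\<bar>?R\<bar> = (-1) ^ Suc m * ?R"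
    using bounds(1) abs_of_pos[OF bounds(1)] by (simp add: abs_mult)
  with bounds(2) show "\<bar>?R\<bar> < C (m + 1) * x ^ (2*m+2) / cos x" by simp
qed

end
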